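(* Let $m,d$ be natural numbers with $d\geqslant m+1$ and $c,C$ positive constants. For a natural number $N$, let $L=L(N):\mathbb{R}^d\to\mathbb{R}^m$ be a surjective linear map with matrix $(\lambda_{ij})_{i\leqslant m,j\leqslant d}$, and assume $\Vert L\Vert_\infty\leqslant C$ and $\operatorname{dist}(L,V_{\mathrm{rank}}(m,d))\geqslant c$. Then there exists an $m\times m$ submatrix $M$ of $L$ with (1) $|\det M|=\Omega_{c,C}(1)$ and (2) $\Vert M^{-1}\Vert_\infty=O_{c,C}(1)$ (such $M$ is called a rank matrix of $L$). Furthermore: (3) if $\mathbf v\in\mathbb{R}^d$ is such that $\mathbf v^T$ lies in the row space of $L$ and $\Vert\mathbf v\Vert_\infty\leqslant C_1$ for some constant $C_1>0$, then there exist coefficients $a_1,\dots,a_m$ with $|a_i|=O_{c,C,C_1}(1)$ such that $\sum_{i=1}^m a_i\lambda_{ij}=v_j$ for all $1\leqslant j\leqslant d$; and (4) if $L$ satisfies the stronger hypothesis $\operatorname{dist}(L,V^{\mathrm{gbl}}_{\mathrm{rank}}(m,d))\geqslant c$, then for each $j$ there is a rank matrix of $L$ not containing the $j$-th column of $L$.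
   Context: $\Vert\cdot\Vert_\infty$ is the maximum absolute value of matrix entries; $\operatorname{dist}$ is the $\ell^\infty$ distance on entries. $V_{\mathrm{rank}}(m,d)$ is the set of $m\times d$ real matrices of rank $<m$. $V^{\mathrm{gbl}}_{\mathrm{rank}}(m,d)$ is the set of linear maps $L:\mathbb{R}^d\to\mathbb{R}^m$ for which there is a standard basis vector $\mathbf e_i$ such that $L$ restricted to $\mathrm{span}(\mathbf e_j:j\neq i)$ has rank $<m$. $O_{c,C}(1)$ (resp. $\Omega_{c,C}(1)$) denotes a quantity bounded above (resp. below by a positive quantity) by a constant depending only on $c,C,m,d$; in (3) the constant may also depend on $C_1$. *)

theory Defs
  imports "HOL-Analysis.Analysis"
begin

definition mat_maxnorm :: "real^'n^'m \<Rightarrow> real" where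
  "mat_maxnorm A = Max {\<bar>A $ i $ j\<bar> | i j. True}"

definition vec_maxnorm :: "real^'n \<Rightarrow> real" where
  "vec_maxnorm v = Max {\<bar>v $ j\<bar> | j. True}"

definition mat_dist_set :: "real^'n^'m \<Rightarrow> (real^'n^'m) set \<Rightarrow> real" where
  "mat_dist_set L S = Inf {mat_maxnorm (L - B) | B. B \<in> S}"

definition V_rank :: "(real^'d^'m) set" where
  "V_rank = {B. rank B < CARD('m)}"

definition V_rank_gbl :: "(real^'d^'m) set" where
  "V_rank_gbl = {B. \<exists>i::'d. dim ((\<lambda>x. B *v x) ` span {axis j 1 | j. j \<noteq> i}) < CARD('m)}"

definition col_submatrix :: "real^'d^'m \<Rightarrow> ('m \<Rightarrow> 'd) \<Rightarrow> real^'m^'m" where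
  "col_submatrix L \<sigma> = (\<chi> i k. L $ i $ (\<sigma> k))"

definition is_rank_matrix :: "real \<Rightarrow> real \<Rightarrow> real^'d^'m \<Rightarrow> ('m \<Rightarrow> 'd) \<Rightarrow> bool" where
  "is_rank_matrix \<delta> K L \<sigma> \<longleftrightarrow> inj \<sigma> \<and>
     \<bar>det (col_submatrix L \<sigma>)\<bar> \<ge> \<delta> \<and>
     mat_maxnorm (matrix_inv (col_submatrix L \<sigma>)) \<le> K"

end

theory Submission
  imports Defs
begin

text \<open>The admissible matrices (entries at most C, sup-norm distance at least c from the
  matrices of rank < m) form a compact set on which every matrix has full rank, so the finitely
  many m \<times> m minors never vanish simultaneously. By continuity and compactness some minor has
  determinant at least a uniform \<delta> > 0, and then Cramer's rule bounds the entries of its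
  inverse by m! max(C,1)^m / \<delta>. The coefficients of a row-space vector are its restriction to
  the columns of that minor times the inverse, hence bounded as well. For (4) the same argument
  runs, for each column j, over the minors avoiding j.\<close>

lemma mat_maxnorm_le_iff: "mat_maxnorm (A::real^'n^'m) \<le> K \<longleftrightarrow> (\<forall>i j. \<bar>A$i$j\<bar> \<le> K)"
proof -
  have "{\<bar>A $ i $ j\<bar> | i j. True} = (\<lambda>(i,j). \<bar>A $ i $ j\<bar>) ` UNIV" by auto
  then show ?thesis unfolding mat_maxnorm_def by (subst Max_le_iff) auto
qed

lemma mat_maxnorm_ge_iff: "K \<le> mat_maxnorm (A::real^'n^'m) \<longleftrightarrow> (\<exists>i j. K \<le> \<bar>A$i$j\<bar>)"
proof -
  have "{\<bar>A $ i $ j\<bar> | i j. True} = (\<lambda>(i,j). \<bar>A $ i $ j\<bar>) ` UNIV" by auto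
  then show ?thesis unfolding mat_maxnorm_def by (subst Max_ge_iff) auto
qed

lemma mat_maxnorm_nonneg: "0 \<le> mat_maxnorm (A::real^'n^'m)"
  using mat_maxnorm_ge_iff[of 0 A] by auto

lemma vec_maxnorm_le_iff: "vec_maxnorm (v::real^'n) \<le> K \<longleftrightarrow> (\<forall>j. \<bar>v$j\<bar> \<le> K)"
proof -
  have "{\<bar>v $ j\<bar> | j. True} = (\<lambda>j. \<bar>v $ j\<bar>) ` UNIV" by auto
  then show ?thesis unfolding vec_maxnorm_def by (subst Max_le_iff) auto
qed

lemma compact_mat_maxnorm_le: "compact {L::real^'n^'m. mat_maxnorm L \<le> C}"
proof -
  have "norm L \<le> real CARD('m) * (real CARD('n) * C)" if "mat_maxnorm L \<le> C" for L :: "real^'n^'m"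
  proof -
    have "norm L \<le> (\<Sum>i\<in>UNIV. norm (L$i))"
      unfolding norm_vec_def by (rule L2_set_le_sum) simp
    also have "\<dots> \<le> (\<Sum>i\<in>(UNIV::'m set). \<Sum>j\<in>(UNIV::'n set). \<bar>L$i$j\<bar>)"
      by (intro sum_mono norm_le_l1_cart)
    also have "\<dots> \<le> (\<Sum>i\<in>(UNIV::'m set). \<Sum>j\<in>(UNIV::'n set). C)"
      using that by (intro sum_mono) (simp add: mat_maxnorm_le_iff)
    finally show ?thesis by simp
  qed
  then have "bounded {L::real^'n^'m. mat_maxnorm L \<le> C}"
    unfolding bounded_iff by blast
  moreover have "closed {L::real^'n^'m. mat_maxnorm L \<le> C}"
    unfolding mat_maxnorm_le_iff by (intro closed_Collect_all closed_Collect_le continuous_intros)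
  ultimately show ?thesis by (simp add: compact_eq_bounded_closed)
qed

definition far_from :: "real \<Rightarrow> (real^'n^'m) set \<Rightarrow> (real^'n^'m) set" where
  "far_from c T = {L. \<forall>B\<in>T. c \<le> mat_maxnorm (L - B)}"

lemma closed_far_from: "closed (far_from c T)"
proof -
  have "far_from c T = (\<Inter>B\<in>T. \<Union>(i,j)\<in>UNIV. {L. c \<le> \<bar>L $ i $ j - B $ i $ j\<bar>})"
    by (auto simp: far_from_def mat_maxnorm_ge_iff)
  then show ?thesis
    by (auto intro!: closed_INT closed_UN closed_Collect_le continuous_intros)
qed

lemma far_from_if_mat_dist_set_ge:
  assumes "c \<le> mat_dist_set L T"
  shows "L \<in> far_from c T"
proof -
  have "mat_dist_set L T \<le> mat_maxnorm (L - B)" if "B \<in> T" for B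
    unfolding mat_dist_set_def
    by (rule cInf_lower) (use that mat_maxnorm_nonneg in \<open>auto intro!: bdd_belowI[of _ 0]\<close>)
  with assms show ?thesis by (auto simp: far_from_def intro: order_trans)
qed

lemma not_in_if_far_from:
  assumes "0 < c" "L \<in> far_from c T"
  shows "L \<notin> T"
proof
  assume "L \<in> T"
  then have "c \<le> mat_maxnorm (L - L)"
    using assms(2) unfolding far_from_def by blast
  moreover have "mat_maxnorm (L - L) \<le> 0"
    by (simp add: mat_maxnorm_le_iff)
  ultimately show False
    using assms(1) by linarith
qed

lemma image_span_axes_eq_span_columns:
  fixes L :: "real^'d^'m"
  shows "(\<lambda>x. L *v x) ` span {axis j 1 | j. j \<in> J} = span {column j L | j. j \<in> J}"
proof -
  have image_axes: "(\<lambda>x. L *v x) ` {axis j 1 | j. j \<in> J} = {column j L | j. j \<in> J}"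
    by (auto simp: image_Collect matrix_vector_mult_basis) (metis matrix_vector_mult_basis)
  show ?thesis
    unfolding image_axes[symmetric] by (rule linear_span_image[OF matrix_vector_mul_linear, symmetric])
qed

lemma span_eq_UNIV_if_dim_ge:
  fixes S :: "(real^'m) set"
  assumes "CARD('m) \<le> dim S"
  shows "span S = UNIV"
proof -
  have "dim S = DIM(real^'m)"
    using assms dim_subset_UNIV_cart[of S] by simp
  then show ?thesis by (simp only: dim_eq_full)
qed

lemma span_columns_eq_UNIV_if_not_V_rank:
  fixes L :: "real^'d^'m"
  assumes "L \<notin> V_rank"
  shows "span {column j L | j. j \<in> UNIV} = UNIV"
proof -
  have "{axis j 1 | j. j \<in> (UNIV::'d set)} = (Basis :: (real^'d) set)"
    by (auto simp: Basis_vec_def)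
  then have "range (\<lambda>x. L *v x) = span {column j L | j. j \<in> UNIV}"
    using image_span_axes_eq_span_columns[of L UNIV] by simp
  moreover have "CARD('m) \<le> dim (range (\<lambda>x. L *v x))"
    using assms by (simp add: V_rank_def rank_dim_range)
  ultimately have "CARD('m) \<le> dim (span {column j L | j. j \<in> UNIV})"
    by (simp only:)
  then show ?thesis
    unfolding dim_span by (rule span_eq_UNIV_if_dim_ge)
qed

lemma span_columns_eq_UNIV_if_not_V_rank_gbl:
  fixes L :: "real^'d^'m"
  assumes "L \<notin> V_rank_gbl"
  shows "span {column j L | j. j \<in> - {i}} = UNIV"
proof -
  have "{axis j 1 | j. j \<in> - {i}} = {axis j (1::real) | j. j \<noteq> i}"
    by blast
  moreover have "\<not> dim ((\<lambda>x. L *v x) ` span {axis j 1 | j. j \<noteq> i}) < CARD('m)"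
    using assms unfolding V_rank_gbl_def by blast
  ultimately have "CARD('m) \<le> dim ((\<lambda>x. L *v x) ` span {axis j 1 | j. j \<in> - {i}})"
    by simp
  then show ?thesis
    unfolding image_span_axes_eq_span_columns dim_span by (rule span_eq_UNIV_if_dim_ge)
qed

lemma column_col_submatrix: "column k (col_submatrix L \<sigma>) = column (\<sigma> k) L"
  by (simp add: col_submatrix_def column_def)

text \<open>A basis of the column space can be extracted from any spanning family of columns.\<close>

lemma exists_nonsingular_col_submatrix:
  fixes L :: "real^'d^'m"
  assumes "span {column j L | j. j \<in> J} = UNIV"
  shows "\<exists>\<sigma>. inj \<sigma> \<and> range \<sigma> \<subseteq> J \<and> det (col_submatrix L \<sigma>) \<noteq> 0"
proof -
  obtain B where B: "B \<subseteq> {column j L | j. j \<in> J}" "independent B" "{column j L | j. j \<in> J} \<subseteq> span B"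
    using maximal_independent_subset by blast
  have "span B = UNIV"
    using span_minimal[OF B(3) subspace_span] assms by (simp add: top.extremum_unique)
  then have "dim B = CARD('m)"
    using dim_eq_full[of B] by simp
  then have "card B = CARD('m)"
    using dim_eq_card_independent[OF B(2)] by simp
  then obtain g where g: "bij_betw g (UNIV::'m set) B"
    using finite_same_card_bij[of "UNIV::'m set" B] finiteI_independent[OF B(2)] by auto
  have "\<forall>b\<in>B. \<exists>j. j \<in> J \<and> column j L = b"
    using B(1) by blast
  then obtain col where col: "\<And>b. b \<in> B \<Longrightarrow> col b \<in> J \<and> column (col b) L = b"
    by metis
  define \<sigma> where "\<sigma> = col \<circ> g"
  have g_in: "g k \<in> B" for k
    using g bij_betwE by blast
  have column_\<sigma>: "column (\<sigma> k) L = g k" for k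
    using col g_in by (simp add: \<sigma>_def)
  have "inj \<sigma>"
  proof
    fix x y
    assume "\<sigma> x = \<sigma> y"
    then have "g x = g y"
      using column_\<sigma> by metis
    then show "x = y"
      using g by (simp add: bij_betw_def inj_eq)
  qed
  moreover have "range \<sigma> \<subseteq> J"
    using col g_in by (auto simp: \<sigma>_def)
  moreover have "columns (col_submatrix L \<sigma>) = B"
    using g column_\<sigma> by (auto simp: columns_def column_col_submatrix bij_betw_def)
  then have "vec.span (columns (col_submatrix L \<sigma>)) = UNIV"
    using \<open>span B = UNIV\<close> by (simp add: span_vec_eq)
  then have "invertible (col_submatrix L \<sigma>)"
    using matrix_right_invertible_span_columns invertible_right_inverse by blast
  ultimately show ?thesis
    using invertible_det_nz by blast
qed

lemma uniformly_nonzero_on_compact: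
  fixes f :: "'i \<Rightarrow> 'a::topological_space \<Rightarrow> real"
  assumes "compact S" "finite I" "\<And>i. i \<in> I \<Longrightarrow> continuous_on S (f i)"
    and "\<And>x. x \<in> S \<Longrightarrow> \<exists>i\<in>I. f i x \<noteq> 0"
  shows "\<exists>\<delta>>0. \<forall>x\<in>S. \<exists>i\<in>I. \<delta> \<le> \<bar>f i x\<bar>"
proof (cases "S = {}")
  case True
  then show ?thesis by (intro exI[of _ 1]) auto
next
  case False
  define F where "F x = (\<Sum>i\<in>I. \<bar>f i x\<bar>)" for x
  have "continuous_on S F"
    unfolding F_def using assms(3) by (intro continuous_intros) auto
  then obtain x0 where x0: "x0 \<in> S" "\<And>x. x \<in> S \<Longrightarrow> F x0 \<le> F x"
    using continuous_attains_inf[OF assms(1) False] by blast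
  obtain i0 where i0: "i0 \<in> I" "f i0 x0 \<noteq> 0"
    using assms(4) x0(1) by blast
  have F_pos: "0 < F x0"
    unfolding F_def using assms(2) i0 by (intro sum_pos2) auto
  have card_pos: "0 < card I"
    using assms(2) i0(1) card_gt_0_iff by blast
  define \<delta> where "\<delta> = F x0 / card I"
  have "\<exists>i\<in>I. \<delta> \<le> \<bar>f i x\<bar>" if "x \<in> S" for x
  proof (rule ccontr)
    assume "\<not> ?thesis"
    then have "F x < (\<Sum>i\<in>I. \<delta>)"
      unfolding F_def using assms(2) i0(1) by (intro sum_strict_mono) auto
    also have "\<dots> = F x0"
      using card_pos by (simp add: \<delta>_def)
    finally show False
      using x0(2)[OF that] by linarith
  qed
  moreover have "0 < \<delta>"
    using F_pos card_pos by (simp add: \<delta>_def)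
  ultimately show ?thesis by blast
qed

lemma continuous_on_det_col_submatrix:
  "continuous_on S (\<lambda>L::real^'d^'m. det (col_submatrix L \<sigma>))"
  unfolding det_def col_submatrix_def
  by (simp add: continuous_intros continuous_on_component)

lemma uniformly_nonsingular_col_submatrix:
  fixes S :: "(real^'d^'m) set"
  assumes "compact S" "\<And>L. L \<in> S \<Longrightarrow> span {column j L | j. j \<in> J} = UNIV"
  shows "\<exists>\<delta>>0. \<forall>L\<in>S. \<exists>\<sigma>. inj \<sigma> \<and> range \<sigma> \<subseteq> J \<and> \<delta> \<le> \<bar>det (col_submatrix L \<sigma>)\<bar>"
proof -
  have "\<exists>\<sigma>\<in>{\<sigma>. inj \<sigma> \<and> range \<sigma> \<subseteq> J}. det (col_submatrix L \<sigma>) \<noteq> 0" if "L \<in> S" for L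
    using exists_nonsingular_col_submatrix[OF assms(2)[OF that]] by blast
  then have "\<exists>\<delta>>0. \<forall>L\<in>S. \<exists>\<sigma>\<in>{\<sigma>. inj \<sigma> \<and> range \<sigma> \<subseteq> J}. \<delta> \<le> \<bar>det (col_submatrix L \<sigma>)\<bar>"
    using assms(1) by (intro uniformly_nonzero_on_compact continuous_on_det_col_submatrix) auto
  then show ?thesis by blast
qed

lemma abs_det_le:
  fixes A :: "real^'n^'n"
  assumes "\<And>i j. \<bar>A$i$j\<bar> \<le> B"
  shows "\<bar>det A\<bar> \<le> fact CARD('n) * B ^ CARD('n)"
proof -
  have abs_sign: "\<bar>of_int (sign p) :: real\<bar> = 1" for p :: "'n \<Rightarrow> 'n"
    by (simp add: sign_def)
  have "\<bar>det A\<bar> \<le> (\<Sum>p\<in>{p. p permutes (UNIV::'n set)}. \<Prod>i\<in>UNIV. \<bar>A $ i $ p i\<bar>)"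
    unfolding det_def by (rule order_trans[OF sum_abs]) (simp add: abs_mult abs_prod abs_sign)
  also have "\<dots> \<le> (\<Sum>p\<in>{p. p permutes (UNIV::'n set)}. \<Prod>i\<in>(UNIV::'n set). B)"
    using assms by (intro sum_mono prod_mono) auto
  also have "\<dots> = fact CARD('n) * B ^ CARD('n)"
    by (simp add: card_permutations)
  finally show ?thesis .
qed

lemma matrix_inv_right:
  fixes M :: "'a::semiring_1^'n^'n"
  assumes "invertible M"
  shows "M ** matrix_inv M = mat 1"
  using assms someI_ex[of "\<lambda>A'. M ** A' = mat 1 \<and> A' ** M = mat 1"]
  unfolding invertible_def matrix_inv_def by blast

text \<open>Cramer's rule: every entry of the inverse is a ratio of determinants whose numerator
  has entries bounded by max B 1.\<close>

lemma mat_maxnorm_matrix_inv_le: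
  fixes M :: "real^'m^'m"
  assumes "0 < \<delta>" "\<delta> \<le> \<bar>det M\<bar>" "\<And>i j. \<bar>M$i$j\<bar> \<le> B" "1 \<le> B"
  shows "mat_maxnorm (matrix_inv M) \<le> fact CARD('m) * B ^ CARD('m) / \<delta>"
  unfolding mat_maxnorm_le_iff
proof (intro allI)
  fix i k
  have det_nz: "det M \<noteq> 0" using assms by auto
  define e where "e = (\<chi> a. (mat 1 :: real^'m^'m) $ a $ k)"
  have "M *v column k (matrix_inv M) = e"
    using matrix_inv_right[of M] invertible_det_nz[of M] det_nz
    by (simp add: e_def vec_eq_iff matrix_vector_mult_def matrix_matrix_mult_def column_def)
  then have "matrix_inv M $ i $ k = det (\<chi> a b. if b = i then e $ a else M $ a $ b) / det M"
    using cramer[OF det_nz] by (simp add: column_def vec_eq_iff)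
  moreover have "\<bar>det (\<chi> a b. if b = i then e $ a else M $ a $ b)\<bar> \<le> fact CARD('m) * B ^ CARD('m)"
    using assms(3,4) by (intro abs_det_le) (auto simp: e_def mat_def)
  ultimately show "\<bar>matrix_inv M $ i $ k\<bar> \<le> fact CARD('m) * B ^ CARD('m) / \<delta>"
    using assms(1,2) by (simp add: abs_divide frac_le)
qed

lemma is_rank_matrix_if_abs_det_ge:
  fixes L :: "real^'d^'m"
  assumes "mat_maxnorm L \<le> C" "inj \<sigma>" "0 < \<delta>" "\<delta> \<le> \<bar>det (col_submatrix L \<sigma>)\<bar>"
  shows "is_rank_matrix \<delta> (fact CARD('m) * max C 1 ^ CARD('m) / \<delta>) L \<sigma>"
proof -
  have "\<bar>col_submatrix L \<sigma> $ i $ j\<bar> \<le> max C 1" for i j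
    using assms(1) by (auto simp: mat_maxnorm_le_iff col_submatrix_def intro: le_max_iff_disj[THEN iffD2])
  then show ?thesis
    using assms mat_maxnorm_matrix_inv_le[of \<delta> "col_submatrix L \<sigma>" "max C 1"]
    by (simp add: is_rank_matrix_def)
qed

lemma uniform_rank_matrix:
  fixes S :: "(real^'d^'m) set"
  assumes "compact S" "\<And>L. L \<in> S \<Longrightarrow> mat_maxnorm L \<le> C"
    and "\<And>L. L \<in> S \<Longrightarrow> span {column j L | j. j \<in> J} = UNIV"
  shows "\<exists>\<delta>0>0. \<forall>L\<in>S. \<forall>\<delta>. 0 < \<delta> \<longrightarrow> \<delta> \<le> \<delta>0 \<longrightarrow>
    (\<exists>\<sigma>. is_rank_matrix \<delta> (fact CARD('m) * max C 1 ^ CARD('m) / \<delta>) L \<sigma> \<and> range \<sigma> \<subseteq> J)"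
proof -
  obtain \<delta>0 where "0 < \<delta>0"
    and \<delta>0: "\<forall>L\<in>S. \<exists>\<sigma>. inj \<sigma> \<and> range \<sigma> \<subseteq> J \<and> \<delta>0 \<le> \<bar>det (col_submatrix L \<sigma>)\<bar>"
    using uniformly_nonsingular_col_submatrix[OF assms(1,3)] by blast
  have "\<exists>\<sigma>. is_rank_matrix \<delta> (fact CARD('m) * max C 1 ^ CARD('m) / \<delta>) L \<sigma> \<and> range \<sigma> \<subseteq> J"
    if L: "L \<in> S" and \<delta>: "0 < \<delta>" "\<delta> \<le> \<delta>0" for L \<delta>
  proof -
    obtain \<sigma> where \<sigma>: "inj \<sigma>" "range \<sigma> \<subseteq> J" "\<delta>0 \<le> \<bar>det (col_submatrix L \<sigma>)\<bar>"
      using \<delta>0 L by blast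
    have "is_rank_matrix \<delta> (fact CARD('m) * max C 1 ^ CARD('m) / \<delta>) L \<sigma>"
      by (rule is_rank_matrix_if_abs_det_ge[OF assms(2)[OF L] \<sigma>(1) \<delta>(1)])
        (use \<sigma>(3) \<delta>(2) in linarith)
    with \<sigma>(2) show ?thesis by blast
  qed
  with \<open>0 < \<delta>0\<close> show ?thesis by blast
qed

lemma row_space_coeffs:
  fixes L :: "real^'d^'m"
  assumes "v \<in> span (rows L)"
  shows "\<exists>b. \<forall>j. (\<Sum>i\<in>UNIV. b i * L $ i $ j) = v $ j"
proof -
  have "row i L = transpose L *v axis i 1" for i
    by (simp only: matrix_vector_mult_basis column_transpose)
  then have "span (rows L) \<subseteq> range (\<lambda>x. transpose L *v x)"
    by (intro span_minimal linear_subspace_image subspace_UNIV matrix_vector_mul_linear)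
      (auto simp: rows_def simp del: transpose_matrix_vector)
  with assms obtain x where "v = transpose L *v x" by blast
  then have "\<forall>j. (\<Sum>i\<in>UNIV. x $ i * L $ i $ j) = v $ j"
    by (simp add: matrix_vector_mult_def transpose_def mult.commute)
  then show ?thesis by blast
qed

text \<open>The coefficients of v are forced to be v restricted to the columns of the rank matrix,
  times its inverse.\<close>

lemma bounded_row_space_coeffs:
  fixes L :: "real^'d^'m"
  assumes "is_rank_matrix \<delta> K L \<sigma>" "0 < \<delta>" "v \<in> span (rows L)" "vec_maxnorm v \<le> C1"
  shows "\<exists>a. (\<forall>i. \<bar>a i\<bar> \<le> real CARD('m) * (C1 * K)) \<and> (\<forall>j. (\<Sum>i\<in>UNIV. a i * L $ i $ j) = v $ j)"
proof -
  define M where "M = col_submatrix L \<sigma>"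
  define Mi where "Mi = matrix_inv M"
  have "M ** Mi = mat 1"
    using assms(1,2) invertible_det_nz[of M] matrix_inv_right[of M]
    by (auto simp: is_rank_matrix_def M_def Mi_def)
  moreover obtain b where b: "\<forall>j. (\<Sum>i\<in>UNIV. b i * L $ i $ j) = v $ j"
    using row_space_coeffs assms(3) by blast
  ultimately have b_eq: "b i = (\<Sum>k\<in>UNIV. v $ \<sigma> k * Mi $ k $ i)" for i
  proof -
    have "(\<Sum>k\<in>UNIV. v $ \<sigma> k * Mi $ k $ i) = (\<Sum>l\<in>UNIV. b l * (\<Sum>k\<in>UNIV. M $ l $ k * Mi $ k $ i))"
      by (simp add: M_def col_submatrix_def sum_distrib_left sum_distrib_right
          mult.assoc flip: b) (rule sum.swap)
    also have "\<dots> = (\<Sum>l\<in>UNIV. b l * (mat 1 :: real^'m^'m) $ l $ i)"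
      by (simp add: matrix_matrix_mult_def flip: \<open>M ** Mi = mat 1\<close>)
    also have "\<dots> = b i"
      by (simp add: mat_def if_distrib cong: if_cong)
    finally show ?thesis by simp
  qed
  have "\<bar>b i\<bar> \<le> real CARD('m) * (C1 * K)" for i
  proof -
    have "\<bar>b i\<bar> \<le> (\<Sum>k\<in>UNIV. \<bar>v $ \<sigma> k\<bar> * \<bar>Mi $ k $ i\<bar>)"
      unfolding b_eq by (rule order_trans[OF sum_abs]) (simp add: abs_mult)
    also have "\<dots> \<le> (\<Sum>k\<in>(UNIV::'m set). C1 * K)"
      using assms(1,4) mat_maxnorm_nonneg
      by (intro sum_mono mult_mono) (auto simp: vec_maxnorm_le_iff is_rank_matrix_def
          Mi_def M_def mat_maxnorm_le_iff order_trans[OF abs_ge_zero])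
    finally show ?thesis by simp
  qed
  with b show ?thesis by blast
qed

theorem proposition3p1:
  fixes c C :: real
  assumes dm: "CARD('d) \<ge> CARD('m) + 1"
    and c: "c > 0" and C: "C > 0"
  shows "\<exists>\<delta> K. \<delta> > 0 \<and> K > 0 \<and>
    (\<forall>L :: real^'d^'m.
       surj (\<lambda>x. L *v x) \<and> mat_maxnorm L \<le> C \<and> mat_dist_set L V_rank \<ge> c \<longrightarrow>
       (\<exists>\<sigma>. is_rank_matrix \<delta> K L \<sigma>)) \<and>
    (\<forall>C1 > 0. \<exists>K1 > 0. \<forall>L :: real^'d^'m. \<forall>v :: real^'d.
       surj (\<lambda>x. L *v x) \<and> mat_maxnorm L \<le> C \<and> mat_dist_set L V_rank \<ge> c \<and>
       v \<in> span (rows L) \<and> vec_maxnorm v \<le> C1 \<longrightarrow>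
       (\<exists>a :: 'm \<Rightarrow> real. (\<forall>i. \<bar>a i\<bar> \<le> K1) \<and>
          (\<forall>j. (\<Sum>i\<in>UNIV. a i * L $ i $ j) = v $ j))) \<and>
    (\<forall>L :: real^'d^'m.
       surj (\<lambda>x. L *v x) \<and> mat_maxnorm L \<le> C \<and> mat_dist_set L V_rank \<ge> c \<and>
       mat_dist_set L V_rank_gbl \<ge> c \<longrightarrow>
       (\<forall>j. \<exists>\<sigma>. is_rank_matrix \<delta> K L \<sigma> \<and> j \<notin> range \<sigma>))"
proof -
  define S where "S = {L::real^'d^'m. mat_maxnorm L \<le> C} \<inter> far_from c V_rank"
  define S_gbl where "S_gbl = S \<inter> far_from c V_rank_gbl"
  have "compact S" "compact S_gbl"
    unfolding S_gbl_def S_def by (intro compact_Int_closed compact_mat_maxnorm_le closed_far_from)+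
  have in_S: "L \<in> S" if "mat_maxnorm L \<le> C" "c \<le> mat_dist_set L V_rank" for L
    using that by (simp add: S_def far_from_if_mat_dist_set_ge)
  have in_S_gbl: "L \<in> S_gbl" if "L \<in> S" "c \<le> mat_dist_set L V_rank_gbl" for L
    using that by (simp add: S_gbl_def far_from_if_mat_dist_set_ge)
  have S_bounded: "mat_maxnorm L \<le> C" if "L \<in> S" for L
    using that by (simp add: S_def)
  have "S_gbl \<subseteq> S"
    by (simp add: S_gbl_def)
  have "span {column j L | j. j \<in> UNIV} = UNIV" if "L \<in> S" for L
    by (rule span_columns_eq_UNIV_if_not_V_rank) (use that not_in_if_far_from[OF c] in \<open>auto simp: S_def\<close>)
  from uniform_rank_matrix[OF \<open>compact S\<close> S_bounded this]
  obtain \<delta>1 where \<delta>1: "0 < \<delta>1" "\<forall>L\<in>S. \<forall>\<delta>. 0 < \<delta> \<longrightarrow> \<delta> \<le> \<delta>1 \<longrightarrow>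
      (\<exists>\<sigma>. is_rank_matrix \<delta> (fact CARD('m) * max C 1 ^ CARD('m) / \<delta>) L \<sigma> \<and> range \<sigma> \<subseteq> UNIV)"
    by blast
  have "span {column j L | j. j \<in> - {i}} = UNIV" if "L \<in> S_gbl" for L i
    by (rule span_columns_eq_UNIV_if_not_V_rank_gbl)
      (use that not_in_if_far_from[OF c] in \<open>auto simp: S_gbl_def\<close>)
  then have "\<forall>j. \<exists>\<delta>0>0. \<forall>L\<in>S_gbl. \<forall>\<delta>. 0 < \<delta> \<longrightarrow> \<delta> \<le> \<delta>0 \<longrightarrow>
      (\<exists>\<sigma>. is_rank_matrix \<delta> (fact CARD('m) * max C 1 ^ CARD('m) / \<delta>) L \<sigma> \<and> range \<sigma> \<subseteq> - {j})"
    using uniform_rank_matrix[OF \<open>compact S_gbl\<close>] S_bounded \<open>S_gbl \<subseteq> S\<close> by blast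
  then obtain \<delta>2 where \<delta>2: "\<And>j. 0 < \<delta>2 j" "\<And>j. \<forall>L\<in>S_gbl. \<forall>\<delta>. 0 < \<delta> \<longrightarrow> \<delta> \<le> \<delta>2 j \<longrightarrow>
      (\<exists>\<sigma>. is_rank_matrix \<delta> (fact CARD('m) * max C 1 ^ CARD('m) / \<delta>) L \<sigma> \<and> range \<sigma> \<subseteq> - {j})"
    by metis
  define \<delta> where "\<delta> = min \<delta>1 (Min (range \<delta>2))"
  define K where "K = fact CARD('m) * max C 1 ^ CARD('m) / \<delta>"
  have "0 < \<delta>" "\<delta> \<le> \<delta>1" "\<And>j. \<delta> \<le> \<delta>2 j"
    using \<delta>1(1) \<delta>2(1) by (auto simp: \<delta>_def Min_gr_iff intro: min.coboundedI2)
  then have "0 < K"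
    by (simp add: K_def)
  have rank_matrix_exists: "\<exists>\<sigma>. is_rank_matrix \<delta> K L \<sigma>" if "L \<in> S" for L
    using \<delta>1(2)[rule_format, OF that \<open>0 < \<delta>\<close> \<open>\<delta> \<le> \<delta>1\<close>] by (auto simp: K_def)
  have rank_matrix_avoiding: "\<exists>\<sigma>. is_rank_matrix \<delta> K L \<sigma> \<and> j \<notin> range \<sigma>" if "L \<in> S_gbl" for L j
    using \<delta>2(2)[rule_format, OF that \<open>0 < \<delta>\<close> \<open>\<delta> \<le> \<delta>2 j\<close>] by (auto simp: K_def)
  have coeffs_bounded: "\<exists>a. (\<forall>i. \<bar>a i\<bar> \<le> real CARD('m) * (C1 * K)) \<and>
      (\<forall>j. (\<Sum>i\<in>UNIV. a i * L $ i $ j) = v $ j)"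
    if "L \<in> S" "v \<in> span (rows L)" "vec_maxnorm v \<le> C1" for L v C1
    using rank_matrix_exists[OF that(1)] bounded_row_space_coeffs[OF _ \<open>0 < \<delta>\<close> that(2,3)]
    by blast
  show ?thesis
  proof (rule exI[of _ \<delta>], rule exI[of _ K], intro conjI allI impI; (elim conjE)?)
    fix C1 :: real
    assume "0 < C1"
    then show "\<exists>K1>0. \<forall>(L::real^'d^'m) v. surj (\<lambda>x. L *v x) \<and> mat_maxnorm L \<le> C \<and>
        c \<le> mat_dist_set L V_rank \<and> v \<in> span (rows L) \<and> vec_maxnorm v \<le> C1 \<longrightarrow>
        (\<exists>a. (\<forall>i. \<bar>a i\<bar> \<le> K1) \<and> (\<forall>j. (\<Sum>i\<in>UNIV. a i * L $ i $ j) = v $ j))"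
      using \<open>0 < K\<close> coeffs_bounded[OF in_S]
      by (intro exI[of _ "real CARD('m) * (C1 * K)"] conjI allI impI; (elim conjE)?) auto
  qed (use \<open>0 < \<delta>\<close> \<open>0 < K\<close> rank_matrix_exists[OF in_S]
      rank_matrix_avoiding[OF in_S_gbl[OF in_S]] in blast)+
qed

end
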